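(* Let $A,B,C,D,E\in\mathbb{C}$ with $E\neq0$, $M=\{(x,y,z)\in\mathbb{C}^3 : x^2+y^2+z^2+Exyz-Ax-By-Cz-D=0\}$, and let $V^x=(2z+Exy-C)\partial_y-(2y+Exz-B)\partial_z$, $V^y=-(2z+Exy-C)\partial_x+(2x+Eyz-A)\partial_z$, $V^z=(2y+Exz-B)\partial_x-(2x+Eyz-A)\partial_y$ (vector fields tangent to $M$). For every entire holomorphic function $f\colon\mathbb{C}\to\mathbb{C}$, the vector fields $f(x)V^x$, $f(y)V^y$, $f(z)V^z$ on $M$ are complete. *)

theory Defs
  imports "HOL-Analysis.Analysis"
begin

type_synonym c3 = "complex \<times> complex \<times> complex"

definition Msurf :: "complex \<Rightarrow> complex \<Rightarrow> complex \<Rightarrow> complex \<Rightarrow> complex \<Rightarrow> c3 set" where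
  "Msurf A B C D E = {(x,y,z). x^2 + y^2 + z^2 + E*x*y*z - A*x - B*y - C*z - D = 0}"

definition Vx :: "complex \<Rightarrow> complex \<Rightarrow> complex \<Rightarrow> complex \<Rightarrow> c3 \<Rightarrow> c3" where
  "Vx A B C E p = (case p of (x,y,z) \<Rightarrow>
     (0, 2*z + E*x*y - C, - (2*y + E*x*z - B)))"

definition Vy :: "complex \<Rightarrow> complex \<Rightarrow> complex \<Rightarrow> complex \<Rightarrow> c3 \<Rightarrow> c3" where
  "Vy A B C E p = (case p of (x,y,z) \<Rightarrow>
     (- (2*z + E*x*y - C), 0, 2*x + E*y*z - A))"

definition Vz :: "complex \<Rightarrow> complex \<Rightarrow> complex \<Rightarrow> complex \<Rightarrow> c3 \<Rightarrow> c3" where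
  "Vz A B C E p = (case p of (x,y,z) \<Rightarrow>
     (2*y + E*x*z - B, - (2*x + E*y*z - A), 0))"

definition cscale :: "complex \<Rightarrow> c3 \<Rightarrow> c3" where
  "cscale c p = (case p of (a,b,d) \<Rightarrow> (c*a, c*b, c*d))"

definition complete_vf :: "c3 set \<Rightarrow> (c3 \<Rightarrow> c3) \<Rightarrow> bool" where
  "complete_vf M F \<longleftrightarrow> (\<forall>p\<in>M. \<exists>g1 g2 g3 :: complex \<Rightarrow> complex.
      (g1 0, g2 0, g3 0) = p \<and>
      (\<forall>t. (g1 t, g2 t, g3 t) \<in> M \<and>
           (g1 has_field_derivative fst (F (g1 t, g2 t, g3 t))) (at t) \<and>
           (g2 has_field_derivative fst (snd (F (g1 t, g2 t, g3 t)))) (at t) \<and>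
           (g3 has_field_derivative snd (snd (F (g1 t, g2 t, g3 t)))) (at t)))"

end

theory Submission
  imports Defs
begin

text \<open>Along \<open>f(x) V\<^sup>x\<close> the coordinate \<open>x\<close> stays at its initial value \<open>x\<^sub>0\<close>, so \<open>f\<close> only enters
  through the constant \<open>c = f x\<^sub>0\<close>.
  In the remaining coordinates the field is \<open>c\<close> times the Hamiltonian field of the conic
  \<open>Q(y,z) = y\<^sup>2 + z\<^sup>2 + E x\<^sub>0 y z - B y - C z\<close>, i.e. an affine linear system with constant
  coefficients. Its linear part \<open>L\<close> satisfies \<open>L\<^sup>2 = ((E x\<^sub>0)\<^sup>2 - 4) I\<close>, so the flow is given by
  entire functions of \<open>t\<close> and exists for all complex times; \<open>Q\<close> is conserved, so the curve
  stays in \<open>M\<close>. The fields \<open>f(y) V\<^sup>y\<close> and \<open>f(z) V\<^sup>z\<close> are cyclic relabellings of \<open>f(x) V\<^sup>x\<close>.\<close>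

definition conic :: "complex \<Rightarrow> complex \<Rightarrow> complex \<Rightarrow> complex \<Rightarrow> complex \<Rightarrow> complex" where
  "conic a B C u v = u\<^sup>2 + v\<^sup>2 + a * u * v - B * u - C * v"

lemma Msurf_iff_conic:
  "(x, y, z) \<in> Msurf A B C D E \<longleftrightarrow> conic (E * x) B C y z = D + A * x - x\<^sup>2"
  unfolding Msurf_def conic_def by (auto simp: algebra_simps)

lemma exists_solution_second_order_linear:
  fixes \<mu> :: complex
  shows "\<exists>r r'. r 0 = 0 \<and> r' 0 = 0 \<and>
    (\<forall>t. (r has_field_derivative r' t) (at t) \<and> (r' has_field_derivative 1 + \<mu> * r t) (at t))"
proof (cases "\<mu> = 0")
  case True
  show ?thesis
    by (rule exI[of _ "\<lambda>t. t\<^sup>2 / 2"], rule exI[of _ "\<lambda>t. t"])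
      (auto intro!: derivative_eq_intros simp: True)
next
  case False
  define \<omega> where "\<omega> = csqrt \<mu>"
  have \<omega>: "\<omega>\<^sup>2 = \<mu>" "\<omega> \<noteq> 0"
    using False by (auto simp: \<omega>_def)
  show ?thesis
  proof (rule exI[of _ "\<lambda>t. (cosh (\<omega> * t) - 1) / \<mu>"], rule exI[of _ "\<lambda>t. sinh (\<omega> * t) / \<omega>"],
      intro conjI allI)
    fix t
    show "((\<lambda>t. (cosh (\<omega> * t) - 1) / \<mu>) has_field_derivative sinh (\<omega> * t) / \<omega>) (at t)"
      using \<omega> by (auto intro!: derivative_eq_intros simp: field_simps power2_eq_square)
    show "((\<lambda>t. sinh (\<omega> * t) / \<omega>) has_field_derivative 1 + \<mu> * ((cosh (\<omega> * t) - 1) / \<mu>)) (at t)"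
      using \<omega> False by (auto intro!: derivative_eq_intros simp: field_simps)
  qed simp_all
qed

lemma conic_flow_exists:
  fixes a c B C u0 v0 :: complex
  shows "\<exists>u v. u 0 = u0 \<and> v 0 = v0 \<and> (\<forall>t.
     (u has_field_derivative c * (2 * v t + a * u t - C)) (at t) \<and>
     (v has_field_derivative c * - (2 * u t + a * v t - B)) (at t))"
proof -
  obtain r r' where r0: "r 0 = 0" "r' 0 = 0"
    and r: "\<And>t. (r has_field_derivative r' t) (at t)"
    and r': "\<And>t. (r' has_field_derivative 1 + (a\<^sup>2 - 4) * r t) (at t)"
    using exists_solution_second_order_linear[of "a\<^sup>2 - 4"] by blast
  have rc: "((\<lambda>t. r (c * t)) has_field_derivative r' (c * t) * c) (at t)"
    and rc': "((\<lambda>t. r' (c * t)) has_field_derivative (1 + (a\<^sup>2 - 4) * r (c * t)) * c) (at t)" for t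
    by (auto intro!: DERIV_chain2[OF r] DERIV_chain2[OF r'] derivative_eq_intros)
  \<comment> \<open>For the field \<open>c (L w + b)\<close> with \<open>(p, q) = L w\<^sub>0 + b\<close>, the exponential series
    \<open>w\<^sub>0 + (\<Sum>n\<ge>1. (c t)^n / n! L^(n-1) (p, q))\<close> collapses to the formula below since \<open>L\<^sup>2 = (a\<^sup>2 - 4) I\<close>.\<close>
  define p where "p = 2 * v0 + a * u0 - C"
  define q where "q = - (2 * u0 + a * v0 - B)"
  define u where "u t = u0 + r' (c * t) * p + r (c * t) * (a * p + 2 * q)" for t
  define v where "v t = v0 + r' (c * t) * q - r (c * t) * (2 * p + a * q)" for t
  have "(u has_field_derivative c * (2 * v t + a * u t - C)) (at t)" for t
  proof -
    have "(u has_field_derivative (1 + (a\<^sup>2 - 4) * r (c * t)) * c * p + r' (c * t) * c * (a * p + 2 * q)) (at t)"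
      unfolding u_def by (auto intro!: derivative_eq_intros rc rc')
    then show ?thesis
      by (simp add: u_def v_def p_def q_def algebra_simps power2_eq_square)
  qed
  moreover have "(v has_field_derivative c * - (2 * u t + a * v t - B)) (at t)" for t
  proof -
    have "(v has_field_derivative (1 + (a\<^sup>2 - 4) * r (c * t)) * c * q - r' (c * t) * c * (2 * p + a * q)) (at t)"
      unfolding v_def by (auto intro!: derivative_eq_intros rc rc')
    then show ?thesis
      by (simp add: u_def v_def p_def q_def algebra_simps power2_eq_square)
  qed
  moreover have "u 0 = u0" "v 0 = v0"
    by (simp_all add: u_def v_def r0)
  ultimately show ?thesis by blast
qed

lemma conic_conserved:
  fixes u v :: "complex \<Rightarrow> complex"
  assumes u: "\<And>t. (u has_field_derivative c * (2 * v t + a * u t - C)) (at t)"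
    and v: "\<And>t. (v has_field_derivative c * - (2 * u t + a * v t - B)) (at t)"
  shows "conic a B C (u t) (v t) = conic a B C (u 0) (v 0)"
proof -
  have "((\<lambda>t. conic a B C (u t) (v t)) has_field_derivative 0) (at s within UNIV)" for s
  proof -
    have "((\<lambda>t. conic a B C (u t) (v t)) has_field_derivative
        (2 * u s + a * v s - B) * (c * (2 * v s + a * u s - C))
        + (2 * v s + a * u s - C) * (c * - (2 * u s + a * v s - B))) (at s)"
      unfolding conic_def
      by (rule derivative_eq_intros u v refl)+ (simp add: algebra_simps power2_eq_square)
    then show ?thesis by (simp add: algebra_simps)
  qed
  then obtain k where "\<forall>t\<in>UNIV. conic a B C (u t) (v t) = k"
    using has_field_derivative_zero_constant[of UNIV] by blast
  then show ?thesis by simp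
qed

lemma complete_vf_Vx:
  "complete_vf (Msurf A B C D E) (\<lambda>p. cscale (f (fst p)) (Vx A B C E p))"
  unfolding complete_vf_def
proof
  fix p assume "p \<in> Msurf A B C D E"
  then obtain x0 y0 z0 where p: "p = (x0, y0, z0)" and M: "conic (E * x0) B C y0 z0 = D + A * x0 - x0\<^sup>2"
    by (cases p) (auto simp: Msurf_iff_conic)
  obtain u v where uv0: "u 0 = y0" "v 0 = z0"
    and u: "\<And>t. (u has_field_derivative f x0 * (2 * v t + E * x0 * u t - C)) (at t)"
    and v: "\<And>t. (v has_field_derivative f x0 * - (2 * u t + E * x0 * v t - B)) (at t)"
    using conic_flow_exists[of y0 z0 "f x0" "E * x0" C B] by blast
  have "(x0, u t, v t) \<in> Msurf A B C D E" for t
    using conic_conserved[OF u v, of t] M uv0 by (simp add: Msurf_iff_conic)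
  then show "\<exists>g1 g2 g3. (g1 0, g2 0, g3 0) = p \<and>
      (\<forall>t. (g1 t, g2 t, g3 t) \<in> Msurf A B C D E \<and>
        (g1 has_field_derivative fst (cscale (f (fst (g1 t, g2 t, g3 t))) (Vx A B C E (g1 t, g2 t, g3 t)))) (at t) \<and>
        (g2 has_field_derivative fst (snd (cscale (f (fst (g1 t, g2 t, g3 t))) (Vx A B C E (g1 t, g2 t, g3 t))))) (at t) \<and>
        (g3 has_field_derivative snd (snd (cscale (f (fst (g1 t, g2 t, g3 t))) (Vx A B C E (g1 t, g2 t, g3 t))))) (at t))"
    using u v by (intro exI[of _ "\<lambda>_. x0"] exI[of _ u] exI[of _ v])
      (simp add: p uv0 cscale_def Vx_def)
qed

lemma complete_vf_rotate:
  assumes "complete_vf M F"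
  shows "complete_vf {(x, y, z). (y, z, x) \<in> M} (\<lambda>(x, y, z). case F (y, z, x) of (v, w, u) \<Rightarrow> (u, v, w))"
  using assms unfolding complete_vf_def
  by (clarsimp simp: case_prod_unfold) (metis fst_conv snd_conv)

lemma Msurf_rotate: "{(x, y, z). (y, z, x) \<in> Msurf B C A D E} = Msurf A B C D E"
  unfolding Msurf_def by (auto simp: algebra_simps)

lemma Vx_rotate_eq_Vy:
  "(\<lambda>(x, y, z). case cscale (f (fst (y, z, x))) (Vx B C A E (y, z, x)) of (v, w, u) \<Rightarrow> (u, v, w))
   = (\<lambda>p. cscale (f (fst (snd p))) (Vy A B C E p))"
  by (auto simp: cscale_def Vx_def Vy_def algebra_simps)

lemma Vy_rotate_eq_Vz:
  "(\<lambda>(x, y, z). case cscale (f (fst (snd (y, z, x)))) (Vy B C A E (y, z, x)) of (v, w, u) \<Rightarrow> (u, v, w))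
   = (\<lambda>p. cscale (f (snd (snd p))) (Vz A B C E p))"
  by (auto simp: cscale_def Vy_def Vz_def algebra_simps)

theorem corollary2p3:
  fixes A B C D E :: complex and f :: "complex \<Rightarrow> complex"
  assumes "E \<noteq> 0" and "f holomorphic_on UNIV"
  shows "complete_vf (Msurf A B C D E) (\<lambda>p. cscale (f (fst p)) (Vx A B C E p))
       \<and> complete_vf (Msurf A B C D E) (\<lambda>p. cscale (f (fst (snd p))) (Vy A B C E p))
       \<and> complete_vf (Msurf A B C D E) (\<lambda>p. cscale (f (snd (snd p))) (Vz A B C E p))"
proof -
  have y: "complete_vf (Msurf A' B' C' D E) (\<lambda>p. cscale (f (fst (snd p))) (Vy A' B' C' E p))" for A' B' C'
    using complete_vf_rotate[OF complete_vf_Vx[of B' C' A' D E f]]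
    unfolding Msurf_rotate Vx_rotate_eq_Vy .
  have z: "complete_vf (Msurf A B C D E) (\<lambda>p. cscale (f (snd (snd p))) (Vz A B C E p))"
    using complete_vf_rotate[OF y[of B C A]]
    unfolding Msurf_rotate Vy_rotate_eq_Vz .
  show ?thesis
    using complete_vf_Vx y z by blast
qed

end
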